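(* (Weakening in MRL.) For every sequent $\Gamma$, every set of roles $R\subseteq\mathcal{R}$ and every formula $A$ of MRL: if $\Gamma$ is derivable in MRL, then $\Gamma, R{:}A$ is derivable in MRL.
   Context: Fix a nonempty set $\mathcal{R}$ (the set of roles). For $R\subseteq\mathcal{R}$ write $\overline{R}=\mathcal{R}\setminus R$. An ultrafilter $\mathcal{U}$ on $\mathcal{R}$ is a set of subsets of $\mathcal{R}$ such that $\mathcal{R}\in\mathcal{U}$; $R_1\in\mathcal{U}$ and $R_1\subseteq R_2$ imply $R_2\in\mathcal{U}$; $R_1,R_2\in\mathcal{U}$ imply $R_1\cap R_2\in\mathcal{U}$; and for every $R\subseteq\mathcal{R}$, $R\in\mathcal{U}$ or $\overline{R}\in\mathcal{U}$. An endomorphism is any function $f:\mathcal{R}\to\mathcal{R}$, and $f^{-1}(R)$ denotes the preimage of $R$. Fix a first-order language of terms $t$ with variables $x$, and a collection of primitive (atomic) formulas $a$ (which may contain terms). Formulas of MRL: $A ::= a \mid \neg_f(A) \mid A_1\wedge_{\mathcal{U}} A_2 \mid A\supset_{f,\mathcal{U}} B \mid \forall_{\mathcal{U}}(\lambda x.A)$, with $f$ an endomorphism and $\mathcal{U}$ an ultrafilter on $\mathcal{R}$; $x$ is bound in $\forall_{\mathcal{U}}(\lambda x.A)$, and $A[t/x]$ is capture-avoiding substitution. An i-formula is a pair $R{:}A$ with $R\subseteq\mathcal{R}$ and $A$ a formula; a sequent is a finite multiset of i-formulas, and comma denotes multiset union. Derivability in MRL is given by the rules (premises $\Rightarrow$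 conclusion, $\Gamma,\Gamma_1,\Gamma_2$ arbitrary sequents): (Id) $\Gamma, R_1{:}a,\ldots,R_n{:}a$ is derivable whenever $n\ge1$ and $R_1,\ldots,R_n$ are pairwise disjoint with union $\mathcal{R}$; (Weaken) $\Gamma,R{:}A,R{:}A \Rightarrow \Gamma,R{:}A$; ($\neg$) $\Gamma, f^{-1}(R){:}A \Rightarrow \Gamma, R{:}\neg_f(A)$; ($\wedge$-neg-l) if $R\notin\mathcal{U}$: $\Gamma,R{:}A\Rightarrow\Gamma,R{:}A\wedge_{\mathcal{U}}B$; ($\wedge$-neg-r) if $R\notin\mathcal{U}$: $\Gamma,R{:}B\Rightarrow\Gamma,R{:}A\wedge_{\mathcal{U}}B$; ($\wedge$-pos) if $R\in\mathcal{U}$: $(\Gamma,R{:}A;\ \Gamma,R{:}B)\Rightarrow\Gamma,R{:}A\wedge_{\mathcal{U}}B$; ($\supset$-neg) if $R\notin\mathcal{U}$: $\Gamma,f^{-1}(R){:}A,R{:}B\Rightarrow\Gamma,R{:}A\supset_{f,\mathcal{U}}B$; ($\supset$-pos) if $R\in\mathcal{U}$: $(\Gamma_1,f^{-1}(R){:}A;\ \Gamma_2,R{:}B)\Rightarrow\Gamma_1,\Gamma_2,R{:}A\supset_{f,\mathcal{U}}B$; ($\forall$-neg) if $R\notin\mathcal{U}$ and $t$ is a term: $\Gamma,R{:}A[t/x]\Rightarrow\Gamma,R{:}\forall_{\mathcal{U}}(\lambda x.A)$; ($\forall$-pos) if $R\in\mathcal{U}$ and $x$ has no free occurrence in $\Gamma$: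 $\Gamma,R{:}A\Rightarrow\Gamma,R{:}\forall_{\mathcal{U}}(\lambda x.A)$. A sequent is derivable in MRL if it is the conclusion of a finite derivation tree built from these rules. *)

theory Defs
  imports Main "HOL-Library.Multiset"
begin

definition ultrafilter :: "'r set set \<Rightarrow> bool" where
  "ultrafilter U \<longleftrightarrow>
     UNIV \<in> U \<and>
     (\<forall>R1 R2. R1 \<in> U \<and> R1 \<subseteq> R2 \<longrightarrow> R2 \<in> U) \<and>
     (\<forall>R1 R2. R1 \<in> U \<and> R2 \<in> U \<longrightarrow> R1 \<inter> R2 \<in> U) \<and>
     (\<forall>R. R \<in> U \<or> - R \<in> U)"

text \<open>Free variables are named by naturals (an infinite supply), bound variables
  are de Bruijn indices.\<close>

datatype 'f tm = Var nat | BVar nat | Fn 'f "'f tm list"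

datatype ('r, 'f, 'p) fm =
    Atom 'p "'f tm list"
  | Neg "'r \<Rightarrow> 'r" "('r, 'f, 'p) fm"
  | Conj "'r set set" "('r, 'f, 'p) fm" "('r, 'f, 'p) fm"
  | Imp "'r \<Rightarrow> 'r" "'r set set" "('r, 'f, 'p) fm" "('r, 'f, 'p) fm"
  | All "'r set set" "('r, 'f, 'p) fm"

fun open_tm :: "nat \<Rightarrow> 'f tm \<Rightarrow> 'f tm \<Rightarrow> 'f tm" where
  "open_tm k u (Var x) = Var x"
| "open_tm k u (BVar i) = (if i = k then u else BVar i)"
| "open_tm k u (Fn f ts) = Fn f (map (open_tm k u) ts)"

fun open_fm :: "nat \<Rightarrow> 'f tm \<Rightarrow> ('r, 'f, 'p) fm \<Rightarrow> ('r, 'f, 'p) fm" where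
  "open_fm k u (Atom p ts) = Atom p (map (open_tm k u) ts)"
| "open_fm k u (Neg f A) = Neg f (open_fm k u A)"
| "open_fm k u (Conj U A B) = Conj U (open_fm k u A) (open_fm k u B)"
| "open_fm k u (Imp f U A B) = Imp f U (open_fm k u A) (open_fm k u B)"
| "open_fm k u (All U A) = All U (open_fm (Suc k) u A)"

text \<open>A[t/x] for the variable bound by the outermost quantifier.\<close>
abbreviation inst :: "('r, 'f, 'p) fm \<Rightarrow> 'f tm \<Rightarrow> ('r, 'f, 'p) fm" where
  "inst A t \<equiv> open_fm 0 t A"

fun fv_tm :: "'f tm \<Rightarrow> nat set" where
  "fv_tm (Var x) = {x}"
| "fv_tm (BVar i) = {}"
| "fv_tm (Fn f ts) = (\<Union>t\<in>set ts. fv_tm t)"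

fun fv_fm :: "('r, 'f, 'p) fm \<Rightarrow> nat set" where
  "fv_fm (Atom p ts) = (\<Union>t\<in>set ts. fv_tm t)"
| "fv_fm (Neg f A) = fv_fm A"
| "fv_fm (Conj U A B) = fv_fm A \<union> fv_fm B"
| "fv_fm (Imp f U A B) = fv_fm A \<union> fv_fm B"
| "fv_fm (All U A) = fv_fm A"

fun lc_tm :: "nat \<Rightarrow> 'f tm \<Rightarrow> bool" where
  "lc_tm k (Var x) = True"
| "lc_tm k (BVar i) = (i < k)"
| "lc_tm k (Fn f ts) = (\<forall>t\<in>set ts. lc_tm k t)"

fun lc_fm :: "nat \<Rightarrow> ('r, 'f, 'p) fm \<Rightarrow> bool" where
  "lc_fm k (Atom p ts) = (\<forall>t\<in>set ts. lc_tm k t)"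
| "lc_fm k (Neg f A) = lc_fm k A"
| "lc_fm k (Conj U A B) = (lc_fm k A \<and> lc_fm k B)"
| "lc_fm k (Imp f U A B) = (lc_fm k A \<and> lc_fm k B)"
| "lc_fm k (All U A) = lc_fm (Suc k) A"

fun ufs_ok :: "('r, 'f, 'p) fm \<Rightarrow> bool" where
  "ufs_ok (Atom p ts) = True"
| "ufs_ok (Neg f A) = ufs_ok A"
| "ufs_ok (Conj U A B) = (ultrafilter U \<and> ufs_ok A \<and> ufs_ok B)"
| "ufs_ok (Imp f U A B) = (ultrafilter U \<and> ufs_ok A \<and> ufs_ok B)"
| "ufs_ok (All U A) = (ultrafilter U \<and> ufs_ok A)"

definition mrl_fm :: "('r, 'f, 'p) fm \<Rightarrow> bool" where
  "mrl_fm A \<longleftrightarrow> ufs_ok A \<and> lc_fm 0 A"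

definition mrl_tm :: "'f tm \<Rightarrow> bool" where
  "mrl_tm t \<longleftrightarrow> lc_tm 0 t"

type_synonym ('r, 'f, 'p) sequent = "('r set \<times> ('r, 'f, 'p) fm) multiset"

definition fv_seq :: "('r, 'f, 'p) sequent \<Rightarrow> nat set" where
  "fv_seq \<Gamma> = (\<Union>iA\<in>set_mset \<Gamma>. fv_fm (snd iA))"

inductive derivable :: "('r, 'f, 'p) sequent \<Rightarrow> bool" where
  Id: "\<lbrakk> Rs \<noteq> [];
         \<forall>i<length Rs. \<forall>j<length Rs. i \<noteq> j \<longrightarrow> Rs ! i \<inter> Rs ! j = {};
         \<Union> (set Rs) = UNIV \<rbrakk>
       \<Longrightarrow> derivable (\<Gamma> + mset (map (\<lambda>R. (R, Atom p ts)) Rs))"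
| Weaken: "derivable (\<Gamma> + {#(R, A), (R, A)#}) \<Longrightarrow> derivable (\<Gamma> + {#(R, A)#})"
| NegR: "derivable (\<Gamma> + {#(f -` R, A)#}) \<Longrightarrow> derivable (\<Gamma> + {#(R, Neg f A)#})"
| ConjNegL: "\<lbrakk> R \<notin> U; derivable (\<Gamma> + {#(R, A)#}) \<rbrakk>
       \<Longrightarrow> derivable (\<Gamma> + {#(R, Conj U A B)#})"
| ConjNegR: "\<lbrakk> R \<notin> U; derivable (\<Gamma> + {#(R, B)#}) \<rbrakk>
       \<Longrightarrow> derivable (\<Gamma> + {#(R, Conj U A B)#})"
| ConjPos: "\<lbrakk> R \<in> U; derivable (\<Gamma> + {#(R, A)#}); derivable (\<Gamma> + {#(R, B)#}) \<rbrakk>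
       \<Longrightarrow> derivable (\<Gamma> + {#(R, Conj U A B)#})"
| ImpNeg: "\<lbrakk> R \<notin> U; derivable (\<Gamma> + {#(f -` R, A), (R, B)#}) \<rbrakk>
       \<Longrightarrow> derivable (\<Gamma> + {#(R, Imp f U A B)#})"
| ImpPos: "\<lbrakk> R \<in> U; derivable (\<Gamma>1 + {#(f -` R, A)#}); derivable (\<Gamma>2 + {#(R, B)#}) \<rbrakk>
       \<Longrightarrow> derivable (\<Gamma>1 + \<Gamma>2 + {#(R, Imp f U A B)#})"
| AllNeg: "\<lbrakk> R \<notin> U; mrl_tm t; derivable (\<Gamma> + {#(R, inst A t)#}) \<rbrakk>
       \<Longrightarrow> derivable (\<Gamma> + {#(R, All U A)#})"
| AllPos: "\<lbrakk> R \<in> U; x \<notin> fv_seq \<Gamma>; x \<notin> fv_fm A;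
            derivable (\<Gamma> + {#(R, inst A (Var x))#}) \<rbrakk>
       \<Longrightarrow> derivable (\<Gamma> + {#(R, All U A)#})"

end

theory Submission
  imports Defs "HOL-Combinatorics.Transposition"
begin

text \<open>Weakening by induction on derivations is blocked only by the eigenvariable condition of
  the positive \<open>\<forall>\<close>-rule: the added formula may mention the eigenvariable. So we prove the
  stronger statement that derivability is preserved by injective renamings of free variables
  combined with weakening by an arbitrary sequent; in the \<open>\<forall>\<close>-case the renaming is
  post-composed with a transposition sending the eigenvariable to a variable fresh for
  everything in sight, which leaves the rest of the conclusion unchanged.\<close>

fun ren_tm :: "(nat \<Rightarrow> nat) \<Rightarrow> 'f tm \<Rightarrow> 'f tm" where
  "ren_tm \<pi> (Var x) = Var (\<pi> x)"
| "ren_tm \<pi> (BVar i) = BVar i"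
| "ren_tm \<pi> (Fn f ts) = Fn f (map (ren_tm \<pi>) ts)"

fun ren_fm :: "(nat \<Rightarrow> nat) \<Rightarrow> ('r, 'f, 'p) fm \<Rightarrow> ('r, 'f, 'p) fm" where
  "ren_fm \<pi> (Atom p ts) = Atom p (map (ren_tm \<pi>) ts)"
| "ren_fm \<pi> (Neg f A) = Neg f (ren_fm \<pi> A)"
| "ren_fm \<pi> (Conj U A B) = Conj U (ren_fm \<pi> A) (ren_fm \<pi> B)"
| "ren_fm \<pi> (Imp f U A B) = Imp f U (ren_fm \<pi> A) (ren_fm \<pi> B)"
| "ren_fm \<pi> (All U A) = All U (ren_fm \<pi> A)"

definition ren_seq :: "(nat \<Rightarrow> nat) \<Rightarrow> ('r, 'f, 'p) sequent \<Rightarrow> ('r, 'f, 'p) sequent" where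
  "ren_seq \<pi> \<Gamma> = image_mset (\<lambda>(R, A). (R, ren_fm \<pi> A)) \<Gamma>"

lemma ren_seq_plus [simp]: "ren_seq \<pi> (\<Gamma> + \<Delta>) = ren_seq \<pi> \<Gamma> + ren_seq \<pi> \<Delta>"
  by (simp add: ren_seq_def)

lemma ren_seq_add_mset [simp]:
  "ren_seq \<pi> (add_mset (R, A) \<Gamma>) = add_mset (R, ren_fm \<pi> A) (ren_seq \<pi> \<Gamma>)"
  by (simp add: ren_seq_def)

lemma ren_seq_atoms [simp]:
  "ren_seq \<pi> (image_mset (\<lambda>R. (R, Atom p ts)) M) = image_mset (\<lambda>R. (R, Atom p (map (ren_tm \<pi>) ts))) M"
  by (simp add: ren_seq_def multiset.map_comp comp_def)

lemma ren_tm_id: "ren_tm id t = t"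
  by (induct t) (auto simp: map_idI)

lemma ren_fm_id: "ren_fm id A = A"
  by (induct A) (auto simp: ren_tm_id[unfolded id_def] map_idI)

lemma ren_seq_id [simp]: "ren_seq id \<Gamma> = \<Gamma>"
  by (simp add: ren_seq_def ren_fm_id case_prod_unfold)

lemma ren_tm_cong: "(\<And>z. z \<in> fv_tm t \<Longrightarrow> \<pi> z = \<sigma> z) \<Longrightarrow> ren_tm \<pi> t = ren_tm \<sigma> t"
  by (induct t) auto

lemma ren_fm_cong: "(\<And>z. z \<in> fv_fm A \<Longrightarrow> \<pi> z = \<sigma> z) \<Longrightarrow> ren_fm \<pi> A = ren_fm \<sigma> A"
  by (induct A) (auto intro: ren_tm_cong)

lemma ren_seq_cong: "(\<And>z. z \<in> fv_seq \<Gamma> \<Longrightarrow> \<pi> z = \<sigma> z) \<Longrightarrow> ren_seq \<pi> \<Gamma> = ren_seq \<sigma> \<Gamma>"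
  unfolding ren_seq_def fv_seq_def by (rule image_mset_cong) (force intro!: ren_fm_cong)

lemma ren_open_tm: "ren_tm \<pi> (open_tm k u t) = open_tm k (ren_tm \<pi> u) (ren_tm \<pi> t)"
  by (induct t) auto

lemma ren_open_fm: "ren_fm \<pi> (open_fm k u A) = open_fm k (ren_tm \<pi> u) (ren_fm \<pi> A)"
  by (induct A arbitrary: k) (auto simp: ren_open_tm)

lemma lc_ren_tm [simp]: "lc_tm k (ren_tm \<pi> t) = lc_tm k t"
  by (induct t) auto

lemma fv_ren_tm: "fv_tm (ren_tm \<pi> t) = \<pi> ` fv_tm t"
  by (induct t) auto

lemma fv_ren_fm: "fv_fm (ren_fm \<pi> A) = \<pi> ` fv_fm A"
  by (induct A) (auto simp: fv_ren_tm)

lemma fv_ren_seq: "fv_seq (ren_seq \<pi> \<Gamma>) = \<pi> ` fv_seq \<Gamma>"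
  unfolding fv_seq_def ren_seq_def by (force simp: fv_ren_fm)

lemma fv_seq_plus [simp]: "fv_seq (\<Gamma> + \<Delta>) = fv_seq \<Gamma> \<union> fv_seq \<Delta>"
  by (auto simp: fv_seq_def)

lemma finite_fv_tm: "finite (fv_tm t)"
  by (induct t) auto

lemma finite_fv_fm: "finite (fv_fm A)"
  by (induct A) (auto simp: finite_fv_tm)

lemma finite_fv_seq: "finite (fv_seq \<Gamma>)"
  by (auto simp: fv_seq_def finite_fv_fm)

lemma ex_fresh_var: "finite S \<Longrightarrow> \<exists>y::nat. y \<notin> S"
  using ex_new_if_finite infinite_UNIV_nat by blast

lemma transpose_inj_apply:
  assumes "inj \<pi>" "z \<noteq> x" "\<pi> z \<noteq> y"
  shows "transpose (\<pi> x) y (\<pi> z) = \<pi> z"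
  using assms by (auto simp: inj_eq transpose_def)

lemma derivable_ren_plus:
  assumes "derivable \<Gamma>" and "inj \<pi>"
  shows "derivable (ren_seq \<pi> \<Gamma> + \<Delta>)"
  using assms
proof (induction arbitrary: \<pi> \<Delta>)
  case (Id Rs \<Gamma> p ts)
  then show ?case
    using derivable.Id[of Rs "ren_seq \<pi> \<Gamma> + \<Delta>" p "map (ren_tm \<pi>) ts"] by (simp add: ac_simps)
next
  case (Weaken \<Gamma> R A)
  then show ?case
    using derivable.Weaken[of "ren_seq \<pi> \<Gamma> + \<Delta>" R "ren_fm \<pi> A"] by (simp add: ac_simps)
next
  case (NegR \<Gamma> f R A)
  then show ?case
    using derivable.NegR[of "ren_seq \<pi> \<Gamma> + \<Delta>" f R "ren_fm \<pi> A"] by (simp add: ac_simps)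
next
  case (ConjNegL R U \<Gamma> A B)
  then show ?case
    using derivable.ConjNegL[of R U "ren_seq \<pi> \<Gamma> + \<Delta>" "ren_fm \<pi> A" "ren_fm \<pi> B"]
    by (simp add: ac_simps)
next
  case (ConjNegR R U \<Gamma> B A)
  then show ?case
    using derivable.ConjNegR[of R U "ren_seq \<pi> \<Gamma> + \<Delta>" "ren_fm \<pi> B" "ren_fm \<pi> A"]
    by (simp add: ac_simps)
next
  case (ConjPos R U \<Gamma> A B)
  then show ?case
    using derivable.ConjPos[of R U "ren_seq \<pi> \<Gamma> + \<Delta>" "ren_fm \<pi> A" "ren_fm \<pi> B"]
    by (simp add: ac_simps)
next
  case (ImpNeg R U \<Gamma> f A B)
  then show ?case
    using derivable.ImpNeg[of R U "ren_seq \<pi> \<Gamma> + \<Delta>" f "ren_fm \<pi> A" "ren_fm \<pi> B"]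
    by (simp add: ac_simps)
next
  case (ImpPos R U \<Gamma>1 f A \<Gamma>2 B)
  have "derivable (ren_seq \<pi> \<Gamma>1 + \<Delta> + {#(f -` R, ren_fm \<pi> A)#})"
    using ImpPos.IH(1)[of \<pi> \<Delta>] ImpPos.prems by (simp add: ac_simps)
  moreover have "derivable (ren_seq \<pi> \<Gamma>2 + {#(R, ren_fm \<pi> B)#})"
    using ImpPos.IH(2)[of \<pi> "{#}"] ImpPos.prems by simp
  ultimately show ?case
    using derivable.ImpPos[OF \<open>R \<in> U\<close>] by (fastforce simp: ac_simps)
next
  case (AllNeg R U t \<Gamma> A)
  then show ?case
    using derivable.AllNeg[of R U "ren_tm \<pi> t" "ren_seq \<pi> \<Gamma> + \<Delta>" "ren_fm \<pi> A"]
    by (simp add: ac_simps mrl_tm_def ren_open_fm)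
next
  case (AllPos R U x \<Gamma> A)
  obtain y where y: "y \<notin> fv_seq (ren_seq \<pi> \<Gamma> + \<Delta>) \<union> fv_fm (ren_fm \<pi> A)"
    using ex_fresh_var finite_fv_seq finite_fv_fm by (metis finite_Un)
  define \<sigma> where "\<sigma> = transpose (\<pi> x) y \<circ> \<pi>"
  have "inj \<sigma>"
    using \<open>inj \<pi>\<close> by (simp add: \<sigma>_def inj_compose inj_transpose)
  have "ren_seq \<sigma> \<Gamma> = ren_seq \<pi> \<Gamma>"
    using AllPos.hyps(2) y \<open>inj \<pi>\<close>
    by (intro ren_seq_cong) (auto simp: \<sigma>_def fv_ren_seq inj_eq intro!: transpose_inj_apply)
  moreover have "ren_fm \<sigma> A = ren_fm \<pi> A"
    using AllPos.hyps(3) y \<open>inj \<pi>\<close>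
    by (intro ren_fm_cong) (auto simp: \<sigma>_def fv_ren_fm inj_eq intro!: transpose_inj_apply)
  moreover have "derivable (ren_seq \<sigma> (\<Gamma> + {#(R, inst A (Var x))#}) + \<Delta>)"
    using AllPos.IH \<open>inj \<sigma>\<close> by blast
  ultimately have "derivable (ren_seq \<pi> \<Gamma> + \<Delta> + {#(R, inst (ren_fm \<pi> A) (Var y))#})"
    by (simp add: ren_open_fm \<sigma>_def ac_simps)
  with \<open>R \<in> U\<close> y show ?case
    using derivable.AllPos[of R U y "ren_seq \<pi> \<Gamma> + \<Delta>" "ren_fm \<pi> A"] by (simp add: ac_simps)
qed

theorem mainTheorem1:
  fixes \<Gamma> :: "('r, 'f, 'p) sequent" and R :: "'r set" and A :: "('r, 'f, 'p) fm"
  assumes "\<forall>iA\<in>set_mset \<Gamma>. mrl_fm (snd iA)"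
    and "mrl_fm A"
    and "derivable \<Gamma>"
  shows "derivable (\<Gamma> + {#(R, A)#})"
  using derivable_ren_plus[OF assms(3) inj_on_id, of "{#(R, A)#}"] by simp

end
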